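(* Let $n\ge2$ and let $X_1,\ldots,X_n$ be independent and identically distributed random vectors in $\mathbb{R}^n$ such that $X_1,\ldots,X_{n-1}$ are linearly independent almost surely, and assume moreover that they are bounded (there is $r>0$ with $\|X_j\|<r$ a.s.). Let $$Y=\frac{\wedge(X_1,\ldots,X_{n-1})}{\|\wedge(X_1,\ldots,X_{n-1})\|_\infty}.$$ Then: (1) for every $y\in\mathcal{C}_{n-1}(Y)$ one has $0\in\mathcal{C}_1(X_n\cdot y)$; (2) $0\in\mathcal{C}_1(X_n\cdot Y)$; (3) $\mathbb{E}\left[\dfrac{1}{|X_n\cdot Y|}\right]=+\infty$.
   Context: The generalized cross product $\wedge:(\mathbb{R}^n)^{n-1}\to\mathbb{R}^n$ is the formal determinant of the $n\times n$ matrix whose first row is $(\mathbf e_1,\ldots,\mathbf e_n)$ (canonical basis vectors) and whose $(j+1)$-th row is $(x_j(1),\ldots,x_j(n))$; it is orthogonal to each $x_j$ and vanishes iff $x_1,\ldots,x_{n-1}$ are linearly dependent. $\|v\|_\infty=\max_i|v(i)|$; $\cdot$ is the Euclidean inner product. For a random vector $Z$ in $\mathbb{R}^k$ and an integer $m\ge0$, the $m$-dimensional mould $\mathcal{C}_m(Z)$ is the set of all $z\in\mathbb{R}^k$ such that $\liminf_{\epsilon\to0^+}\mathbb{P}(\|Z-z\|_2<\epsilon)/\epsilon^m>0$. In (1) and (2), $X_n\cdot y$ and $X_n\cdot Y$ are real random variables. *)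

theory Defs
  imports "HOL-Probability.Probability"
begin

definition idx_rank :: "'n::{finite,linorder} \<Rightarrow> nat" where
  "idx_rank r = card {s. s < r}"

text \<open>Generalized cross product of x 1, ..., x (n-1) in R^n: the formal determinant
  whose first row is (e_1,...,e_n) and whose (j+1)-th row is x j.  Its i-th component is
  the coefficient of e_i, i.e. the determinant with e_i placed in the first row.\<close>
definition gen_cross :: "(nat \<Rightarrow> real^('n::{finite,linorder})) \<Rightarrow> real^('n::{finite,linorder})" where
  "gen_cross x = (\<chi> i. det (\<chi> r c. if idx_rank r = 0 then axis i 1 $ c
                                     else x (idx_rank r) $ c))"

definition mould :: "'a measure \<Rightarrow> nat \<Rightarrow> ('a \<Rightarrow> 'b::real_normed_vector) \<Rightarrow> 'b set" where
  "mould M m Z = {z. Liminf (at_right (0::real))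
       (\<lambda>\<epsilon>. ereal (measure M {\<omega> \<in> space M. norm (Z \<omega> - z) < \<epsilon>} / \<epsilon> ^ m)) > 0}"

end

theory Submission
  imports Defs
begin

text \<open>
  The first \<open>n - 1\<close> vectors are orthogonal to \<open>Y\<close>, so whenever \<open>Y\<close> is \<open>\<epsilon>\<close>-close to \<open>y\<close>
  they all satisfy \<open>\<bar>X j \<bullet> y\<bar> < r \<epsilon>\<close>; by independence and equal distribution,
  \<open>P(\<parallel>Y - y\<parallel> < \<epsilon>) \<le> P(\<bar>X n \<bullet> y\<bar> < r \<epsilon>) ^ (n - 1)\<close>. For \<open>y\<close> in the \<open>(n - 1)\<close>-mould the
  left side is of order \<open>\<epsilon> ^ (n - 1)\<close>, which gives (1).

  For (2), cover the unit sphere of the maximum norm, on which \<open>Y\<close> lies, by \<open>O(\<epsilon> ^ (1 - n))\<close>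
  cubes of side \<open>\<epsilon> / n\<close>. The cubes whose probability is at least half the average carry half
  of the distribution of \<open>Y\<close>, and the estimate above at their centres \<open>c\<close> gives
  \<open>P(\<bar>X n \<bullet> c\<bar> < r \<epsilon>) \<ge> \<epsilon> / C\<close>. As \<open>Y\<close> and \<open>X n\<close> are independent,
  \<open>P(\<bar>X n \<bullet> Y\<bar> < 2 r \<epsilon>) \<ge> \<epsilon> / (2 C)\<close>. Summing this linear small-ball bound over dyadic
  scales gives (3).
\<close>

section \<open>The generalized cross product\<close>

lemma idx_rank_less: "idx_rank (r::'n::{finite,linorder}) < CARD('n)"
  unfolding idx_rank_def by (rule psubset_card_mono) auto

lemma inj_idx_rank: "inj (idx_rank :: 'n::{finite,linorder} \<Rightarrow> nat)"
proof -
  have "idx_rank r < idx_rank s" if "r < s" for r s :: 'n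
    unfolding idx_rank_def by (rule psubset_card_mono) (use that in auto)
  then show ?thesis by (metis injI less_irrefl neq_iff)
qed

lemma range_idx_rank: "range (idx_rank :: 'n::{finite,linorder} \<Rightarrow> nat) = {..<CARD('n)}"
proof (rule card_subset_eq)
  show "range (idx_rank :: 'n \<Rightarrow> nat) \<subseteq> {..<CARD('n)}" using idx_rank_less by auto
  show "card (range (idx_rank :: 'n \<Rightarrow> nat)) = card {..<CARD('n)}"
    using card_image[OF inj_idx_rank] by simp
qed simp

lemma idx_rank_surj:
  assumes "k < CARD('n)" obtains r :: "'n::{finite,linorder}" where "idx_rank r = k"
  using assms range_idx_rank[where 'n='n] by (metis imageE lessThan_iff)

definition cross_matrix ::
    "real^('n::{finite,linorder}) \<Rightarrow> (nat \<Rightarrow> real^('n::{finite,linorder})) \<Rightarrow>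
      real^('n::{finite,linorder})^('n::{finite,linorder})" where
  "cross_matrix v x = (\<chi> r. if idx_rank r = 0 then v else x (idx_rank r))"

lemma row_cross_matrix:
  "row r (cross_matrix v x) = (if idx_rank r = 0 then v else x (idx_rank r))"
  by (simp add: cross_matrix_def row_def)

lemma gen_cross_nth:
  fixes x :: "nat \<Rightarrow> real^('n::{finite,linorder})"
  shows "gen_cross x $ i = det (cross_matrix (axis i 1) x)"
  unfolding gen_cross_def cross_matrix_def by (simp, rule arg_cong[where f=det]) (simp add: vec_eq_iff)

lemma inner_gen_cross:
  fixes x :: "nat \<Rightarrow> real^('n::{finite,linorder})"
  shows "gen_cross x \<bullet> v = det (cross_matrix v x)"
proof -
  obtain r0 :: 'n where r0: "idx_rank r0 = 0" using idx_rank_surj[of 0] by auto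
  have rank0_iff: "idx_rank r = 0 \<longleftrightarrow> r = r0" for r :: 'n
    using inj_idx_rank r0 by (metis injD)
  define c where "c r = x (idx_rank r)" for r :: 'n
  have cm: "cross_matrix w x = (\<chi> r. if r = r0 then w else c r)" for w
    unfolding cross_matrix_def c_def by (simp add: rank0_iff)
  have "det (cross_matrix v x) = det (\<chi> r. if r = r0 then (\<Sum>i\<in>UNIV. (v$i) *s axis i 1) else c r)"
    unfolding cm basis_expansion ..
  also have "\<dots> = (\<Sum>i\<in>UNIV. v$i * det (\<chi> r. if r = r0 then axis i (1::real) else c r))"
    by (simp add: det_linear_row_sum det_row_mul)
  also have "\<dots> = (\<Sum>i\<in>UNIV. v$i * gen_cross x $ i)"
    by (simp add: gen_cross_nth cm)
  also have "\<dots> = gen_cross x \<bullet> v"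
    by (simp add: inner_vec_def mult.commute)
  finally show ?thesis by simp
qed

lemma gen_cross_orthogonal:
  fixes x :: "nat \<Rightarrow> real^('n::{finite,linorder})"
  assumes "1 \<le> k" "k < CARD('n)"
  shows "gen_cross x \<bullet> x k = 0"
proof -
  obtain r0 :: 'n where r0: "idx_rank r0 = 0" using idx_rank_surj[of 0] by auto
  obtain rk :: 'n where rk: "idx_rank rk = k" using idx_rank_surj[of k] assms by auto
  have "rk \<noteq> r0" "row r0 (cross_matrix (x k) x) = row rk (cross_matrix (x k) x)"
    using r0 rk assms by (auto simp: row_cross_matrix)
  then have "det (cross_matrix (x k) x) = 0" by (metis det_identical_rows)
  then show ?thesis by (simp add: inner_gen_cross)
qed

lemma rows_cross_matrix:
  fixes v :: "real^('n::{finite,linorder})"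
  shows "rows (cross_matrix v x) = insert v (x ` {1..CARD('n)-1})"
proof -
  have "rows (cross_matrix v x) = (\<lambda>r. row r (cross_matrix v x)) ` UNIV"
    unfolding rows_def by auto
  also have "\<dots> = (\<lambda>k. if k = 0 then v else x k) ` range (idx_rank :: 'n \<Rightarrow> nat)"
    unfolding row_cross_matrix image_image ..
  also have "\<dots> = (\<lambda>k. if k = 0 then v else x k) ` {..<CARD('n)}"
    by (simp add: range_idx_rank)
  also have "{..<CARD('n)} = insert 0 {1..CARD('n)-1}"
    by auto
  finally show ?thesis by auto
qed

lemma gen_cross_nonzero:
  fixes x :: "nat \<Rightarrow> real^('n::{finite,linorder})"
  assumes inj: "inj_on x {1..CARD('n)-1}" and ind: "independent (x ` {1..CARD('n)-1})"
  shows "gen_cross x \<noteq> 0"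
proof -
  define S where "S = x ` {1..CARD('n)-1}"
  have card_S: "card S = CARD('n) - 1" unfolding S_def using card_image[OF inj] by simp
  have "dim S \<le> CARD('n) - 1"
    using dim_le_card'[of S] card_S by (simp add: S_def)
  then have "dim S < CARD('n)"
    using zero_less_card_finite[where 'a='n] by linarith
  then obtain v where v: "v \<notin> span S" using dim_eq_full[of S] by auto
  have "independent (insert v S)" "card (insert v S) = CARD('n)"
    using ind v card_S span_base[of v S] by (auto simp: S_def independent_insert card_insert_if)
  then have "rank (cross_matrix v x) = CARD('n)"
    by (simp add: row_rank_def rows_cross_matrix S_def dim_eq_card_independent)
  then have "det (cross_matrix v x) \<noteq> 0" by (simp add: det_eq_0_rank)
  then show ?thesis using inner_gen_cross[of x v] by auto
qed

lemma gen_cross_cong: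
  fixes x y :: "nat \<Rightarrow> real^('n::{finite,linorder})"
  assumes "\<And>k. 1 \<le> k \<Longrightarrow> k < CARD('n) \<Longrightarrow> x k = y k"
  shows "gen_cross x = gen_cross y"
proof -
  have "cross_matrix v x = cross_matrix v y" for v
    using assms idx_rank_less[where 'n='n] by (auto simp: cross_matrix_def)
  then show ?thesis by (metis inner_gen_cross vector_eq_rdot)
qed

lemma gen_cross_measurable:
  fixes F :: "nat \<Rightarrow> 'b \<Rightarrow> real^('n::{finite,linorder})"
  assumes F: "\<And>k. 1 \<le> k \<Longrightarrow> k < CARD('n) \<Longrightarrow> F k \<in> borel_measurable N"
  shows "(\<lambda>\<omega>. gen_cross (\<lambda>k. F k \<omega>)) \<in> borel_measurable N"
proof -
  have entry: "(\<lambda>\<omega>. (if idx_rank r = 0 then axis i 1 $ c else F (idx_rank r) \<omega> $ c)) \<in> borel_measurable N"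
    for i r c :: 'n
  proof (cases "idx_rank r = 0")
    case False
    then have "F (idx_rank r) \<in> borel_measurable N" using F idx_rank_less[of r] by simp
    then show ?thesis using False measurable_compose[OF _ borel_measurable_nth] by simp
  qed simp
  show ?thesis
    unfolding borel_measurable_euclidean_space[where 'c="real^('n::{finite,linorder})"]
    using entry by (auto simp: Basis_vec_def inner_axis gen_cross_def det_def)
qed

lemma abs_inner_le_of_inner_eq_0:
  fixes x y u :: "'a::real_inner"
  assumes "x \<bullet> u = 0"
  shows "\<bar>x \<bullet> y\<bar> \<le> norm x * norm (y - u)"
  using Cauchy_Schwarz_ineq2[of x "y - u"] assms by (simp add: inner_diff_right)

lemma borel_measurable_infnorm_normalize:
  "(\<lambda>v::real^'n. (1 / infnorm v) *\<^sub>R v) \<in> borel_measurable borel"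
proof -
  have "infnorm \<in> borel_measurable (borel :: (real^'n) measure)"
    by (intro borel_measurable_continuous_onI continuous_on_infnorm continuous_on_id)
  then show ?thesis by measurable
qed

section \<open>Cubes covering the unit sphere of the maximum norm\<close>

definition cube_index :: "real \<Rightarrow> real^'n \<Rightarrow> int^'n" where
  "cube_index h y = (\<chi> j. \<lfloor>y$j / h\<rfloor>)"

definition cube_center :: "real \<Rightarrow> int^'n \<Rightarrow> real^'n" where
  "cube_center h v = (\<chi> j. h * (of_int (v$j) + 1/2))"

lemma norm_minus_cube_center_le:
  fixes y :: "real^'n"
  assumes "0 < h"
  shows "norm (y - cube_center h (cube_index h y)) \<le> real CARD('n) * h / 2"
proof -
  have "\<bar>(y - cube_center h (cube_index h y)) $ j\<bar> \<le> h / 2" for j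
  proof -
    have "\<lfloor>y$j / h\<rfloor> * h \<le> y$j" "y$j < (\<lfloor>y$j / h\<rfloor> + 1) * h"
      using floor_divide_lower[OF assms] floor_divide_upper[OF assms] by auto
    then show ?thesis by (auto simp: cube_index_def cube_center_def abs_if algebra_simps)
  qed
  then have "(\<Sum>j\<in>UNIV. \<bar>(y - cube_center h (cube_index h y)) $ j\<bar>) \<le> (\<Sum>j\<in>(UNIV::'n set). h / 2)"
    by (intro sum_mono)
  then show ?thesis using norm_le_l1_cart[of "y - cube_center h (cube_index h y)"] by simp
qed

lemma norm_minus_cube_center_less:
  fixes y :: "real^'n"
  assumes "0 < \<epsilon>"
  defines "h \<equiv> \<epsilon> / CARD('n)"
  shows "norm (y - cube_center h (cube_index h y)) < \<epsilon>"
  using norm_minus_cube_center_le[of h y] assms by (simp add: h_def)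

lemma vimage_cube_index_sets: "cube_index h -` {v} \<in> sets (borel :: (real^'n) measure)"
proof -
  have "(\<lambda>y::real^'n. \<lfloor>y$j / h\<rfloor>) \<in> measurable borel (count_space UNIV)" for j
    by (intro measurable_compose[OF _ measurable_real_floor] borel_measurable_divide
        borel_measurable_nth borel_measurable_const)
  then have "(\<Inter>j. (\<lambda>y::real^'n. \<lfloor>y$j / h\<rfloor>) -` {v$j} \<inter> space borel) \<in> sets borel"
    by (intro sets.finite_INT measurable_sets[of _ borel "count_space UNIV"]) auto
  also have "(\<Inter>j. (\<lambda>y::real^'n. \<lfloor>y$j / h\<rfloor>) -` {v$j} \<inter> space borel) = cube_index h -` {v}"
    by (auto simp: cube_index_def vec_eq_iff)
  finally show ?thesis .
qed

lemma card_vec_fixed_coord_le: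
  fixes I :: "'a set" and j :: "'n::finite" and c :: 'a
  assumes "finite I"
  defines "T \<equiv> {v::'a^'n. v$j = c \<and> (\<forall>k. v$k \<in> I)}"
  shows "finite T" "card T \<le> card I ^ (CARD('n) - 1)"
proof -
  let ?f = "\<lambda>v::'a^'n. restrict (\<lambda>k. v$k) (UNIV - {j})"
  let ?P = "PiE (UNIV - {j}) (\<lambda>_. I)"
  have inj: "inj_on ?f T"
  proof
    fix v w assume "v \<in> T" "w \<in> T" "?f v = ?f w"
    then have "v$k = w$k" for k
      by (cases "k = j") (auto simp: T_def fun_eq_iff split: if_splits dest: spec[of _ k])
    then show "v = w" by (simp add: vec_eq_iff)
  qed
  have sub: "?f ` T \<subseteq> ?P" by (auto simp: T_def PiE_def Pi_def)
  have fin: "finite ?P" using assms by (intro finite_PiE) auto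
  show "finite T" using inj sub fin finite_imageD finite_subset by blast
  have "card T \<le> card ?P" using card_inj_on_le[OF inj sub fin] .
  also have "card ?P = card I ^ (CARD('n) - 1)"
    by (simp add: card_PiE card_Diff_singleton)
  finally show "card T \<le> card I ^ (CARD('n) - 1)" .
qed

lemma infnorm_attained: "\<exists>j. \<bar>y$j\<bar> = infnorm (y::real^'n)"
proof -
  have "infnorm y \<in> (\<lambda>i. \<bar>y \<bullet> i\<bar>) ` Basis"
    unfolding infnorm_Max by (rule Max_in) auto
  then show ?thesis by (auto simp: Basis_vec_def inner_axis)
qed

lemma cube_index_sphere_subset:
  assumes "0 < h"
  shows "cube_index h ` {y::real^'n. infnorm y = 1}
    \<subseteq> (\<Union>j. \<Union>c\<in>{\<lfloor>-1/h\<rfloor>, \<lfloor>1/h\<rfloor>}. {v. v$j = c \<and> (\<forall>k. v$k \<in> {\<lfloor>-1/h\<rfloor>..\<lfloor>1/h\<rfloor>})})"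
proof
  fix v assume "v \<in> cube_index h ` {y::real^'n. infnorm y = 1}"
  then obtain y :: "real^'n" where y: "infnorm y = 1" "v = cube_index h y" by auto
  have "v$k \<in> {\<lfloor>-1/h\<rfloor>..\<lfloor>1/h\<rfloor>}" for k
  proof -
    have "-1 \<le> y$k" "y$k \<le> 1" using component_le_infnorm_cart[of y k] y by auto
    then have "-1/h \<le> y$k/h" "y$k/h \<le> 1/h" using assms by (intro divide_right_mono; simp)+
    then show ?thesis by (auto simp: y cube_index_def intro: floor_mono)
  qed
  moreover obtain j where "\<bar>y$j\<bar> = 1" using infnorm_attained[of y] y by auto
  then have "v$j \<in> {\<lfloor>-1/h\<rfloor>, \<lfloor>1/h\<rfloor>}" by (auto simp: y cube_index_def abs_if split: if_splits)
  ultimately show "v \<in> (\<Union>j. \<Union>c\<in>{\<lfloor>-1/h\<rfloor>, \<lfloor>1/h\<rfloor>}. {v. v$j = c \<and> (\<forall>k. v$k \<in> {\<lfloor>-1/h\<rfloor>..\<lfloor>1/h\<rfloor>})})"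
    by auto
qed

lemma card_floor_interval_le:
  assumes "0 < h" "h \<le> 1"
  shows "real (card {\<lfloor>-1/h\<rfloor>..\<lfloor>1/h\<rfloor>}) \<le> 4/h"
proof -
  have "real (card {\<lfloor>-1/h\<rfloor>..\<lfloor>1/h\<rfloor>}) = real_of_int (\<lfloor>1/h\<rfloor> - \<lfloor>-1/h\<rfloor> + 1)"
    using floor_mono[of "-1/h" "1/h"] assms by simp
  also have "\<dots> \<le> 2/h + 2" by linarith
  also have "\<dots> \<le> 4/h" using assms by (simp add: field_simps)
  finally show ?thesis .
qed

lemma card_cube_index_sphere_le:
  assumes h: "0 < h" "h \<le> 1"
  defines "S \<equiv> cube_index h ` {y::real^'n. infnorm y = 1}"
  shows "finite S" "real (card S) \<le> 2 * real CARD('n) * (4/h) ^ (CARD('n) - 1)"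
proof -
  define I where "I = {\<lfloor>-1/h\<rfloor>..\<lfloor>1/h\<rfloor>}"
  define T where "T j c = {v::int^'n. v$j = c \<and> (\<forall>k. v$k \<in> I)}" for j c
  have sub: "S \<subseteq> (\<Union>j. \<Union>c\<in>{\<lfloor>-1/h\<rfloor>, \<lfloor>1/h\<rfloor>}. T j c)"
    using cube_index_sphere_subset[OF h(1)] by (simp add: S_def T_def I_def)
  have fin: "finite (T j c)" and card: "card (T j c) \<le> card I ^ (CARD('n) - 1)" for j c
    unfolding T_def using card_vec_fixed_coord_le[of I] by (simp_all add: I_def)
  show "finite S" using sub fin by (auto intro: finite_subset)
  have "card S \<le> (\<Sum>j\<in>UNIV. \<Sum>c\<in>{\<lfloor>-1/h\<rfloor>, \<lfloor>1/h\<rfloor>}. card (T j c))"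
    using sub fin
    by (intro order_trans[OF card_mono card_UN_le] order_trans[OF _ sum_mono[OF card_UN_le]]) auto
  also have "\<dots> \<le> (\<Sum>j\<in>(UNIV::'n set). 2 * card I ^ (CARD('n) - 1))"
  proof (intro sum_mono)
    fix j
    have "(\<Sum>c\<in>{\<lfloor>-1/h\<rfloor>, \<lfloor>1/h\<rfloor>}. card (T j c)) \<le> card (T j \<lfloor>-1/h\<rfloor>) + card (T j \<lfloor>1/h\<rfloor>)"
      by (cases "\<lfloor>-1/h\<rfloor> = \<lfloor>1/h\<rfloor>") simp_all
    then show "(\<Sum>c\<in>{\<lfloor>-1/h\<rfloor>, \<lfloor>1/h\<rfloor>}. card (T j c)) \<le> 2 * card I ^ (CARD('n) - 1)"
      using card[of j "\<lfloor>-1/h\<rfloor>"] card[of j "\<lfloor>1/h\<rfloor>"] by linarith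
  qed
  finally have "real (card S) \<le> real CARD('n) * (2 * real (card I) ^ (CARD('n) - 1))"
    by (simp only: of_nat_le_iff[symmetric, where 'a=real] of_nat_mult of_nat_numeral of_nat_power
        sum_constant of_nat_id)
  also have "\<dots> \<le> real CARD('n) * (2 * (4/h) ^ (CARD('n) - 1))"
    using card_floor_interval_le[OF h] by (intro mult_left_mono power_mono) (auto simp: I_def)
  finally show "real (card S) \<le> 2 * real CARD('n) * (4/h) ^ (CARD('n) - 1)"
    by simp
qed

section \<open>Small-ball estimates\<close>

lemma mem_mould_iff:
  "z \<in> mould M m Z \<longleftrightarrow>
    (\<exists>c>0. \<forall>\<^sub>F \<epsilon> in at_right 0. c \<le> measure M {\<omega> \<in> space M. norm (Z \<omega> - z) < \<epsilon>} / \<epsilon> ^ m)"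
  (is "_ \<longleftrightarrow> (\<exists>c>0. \<forall>\<^sub>F \<epsilon> in _. c \<le> ?q \<epsilon>)")
proof
  assume "z \<in> mould M m Z"
  then obtain c where c: "0 < ereal c" "ereal c < Liminf (at_right 0) (\<lambda>\<epsilon>. ereal (?q \<epsilon>))"
    unfolding mould_def by (auto dest: ereal_dense2)
  have "\<forall>\<^sub>F \<epsilon> in at_right 0. c \<le> ?q \<epsilon>"
    using less_LiminfD[OF c(2)] by (rule eventually_mono) simp
  then show "\<exists>c>0. \<forall>\<^sub>F \<epsilon> in at_right 0. c \<le> ?q \<epsilon>" using c(1) by auto
next
  assume "\<exists>c>0. \<forall>\<^sub>F \<epsilon> in at_right 0. c \<le> ?q \<epsilon>"
  then obtain c where "0 < c" "\<forall>\<^sub>F \<epsilon> in at_right 0. ereal c \<le> ereal (?q \<epsilon>)" by auto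
  then have "0 < ereal c" "ereal c \<le> Liminf (at_right 0) (\<lambda>\<epsilon>. ereal (?q \<epsilon>))"
    by (auto intro: Liminf_bounded)
  then show "z \<in> mould M m Z" unfolding mould_def using less_le_trans by blast
qed

lemma sum_powers_of_two_below_le:
  assumes "0 < T"
  shows "(\<Sum>k<K. if (2::real) ^ k < T then 2 ^ k else 0) \<le> 2 * T"
proof (induction K)
  case (Suc K)
  show ?case
  proof (cases "(2::real) ^ K < T")
    case True
    have "(\<Sum>k<K. if (2::real) ^ k < T then 2 ^ k else 0) = (\<Sum>k<K. (2::real) ^ k)"
    proof (intro sum.cong refl)
      fix k assume "k \<in> {..<K}"
      then have "(2::real) ^ k \<le> 2 ^ K" by (intro power_increasing) auto
      then have "(2::real) ^ k < T" using True by linarith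
      then show "(if (2::real) ^ k < T then (2::real) ^ k else 0) = 2 ^ k" by simp
    qed
    also have "\<dots> = 2 ^ K - 1"
      by (induction K) auto
    finally show ?thesis using True by simp
  qed (use Suc in simp)
qed (use assms in simp)

lemma sum_dyadic_indicators_le:
  fixes z d :: real
  assumes "z \<noteq> 0" "0 < d"
  shows "(\<Sum>k<K. if \<bar>z\<bar> < d / 2 ^ k then 2 ^ k / (2 * d) else 0) \<le> 1 / \<bar>z\<bar>"
proof -
  have "\<bar>z\<bar> < d / 2 ^ k \<longleftrightarrow> (2::real) ^ k < d / \<bar>z\<bar>" for k
    using assms by (simp add: field_simps)
  then have "(\<Sum>k<K. if \<bar>z\<bar> < d / 2 ^ k then 2 ^ k / (2 * d) else 0)
      = (\<Sum>k<K. (if (2::real) ^ k < d / \<bar>z\<bar> then 2 ^ k else 0) / (2 * d))"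
    by (intro sum.cong) auto
  also have "\<dots> = (\<Sum>k<K. if (2::real) ^ k < d / \<bar>z\<bar> then 2 ^ k else 0) / (2 * d)"
    by (rule sum_divide_distrib[symmetric])
  also have "\<dots> \<le> 2 * (d / \<bar>z\<bar>) / (2 * d)"
    using assms by (intro divide_right_mono sum_powers_of_two_below_le) auto
  also have "\<dots> = 1 / \<bar>z\<bar>" using assms by simp
  finally show ?thesis .
qed

text \<open>The integrand dominates \<open>\<Sum>k<K. 2 ^ k / (2 * d) * indicator {\<bar>Z\<bar> < d / 2 ^ k}\<close>,
  and each term of this sum has integral at least \<open>a / 2\<close>.\<close>

lemma (in prob_space) nn_integral_inverse_abs_ge:
  fixes Z :: "'a \<Rightarrow> real"
  assumes Z[measurable]: "Z \<in> borel_measurable M" and d: "0 < d"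
    and small_ball: "\<And>\<delta>. 0 < \<delta> \<Longrightarrow> \<delta> \<le> d \<Longrightarrow> a * \<delta> \<le> prob {\<omega> \<in> space M. \<bar>Z \<omega>\<bar> < \<delta>}"
  shows "ennreal (real K * (a / 2)) \<le> (\<integral>\<^sup>+ \<omega>. (if Z \<omega> = 0 then \<infinity> else ennreal (1 / \<bar>Z \<omega>\<bar>)) \<partial>M)"
    (is "_ \<le> ?I")
proof -
  define E where "E k = {\<omega> \<in> space M. \<bar>Z \<omega>\<bar> < d / 2 ^ k}" for k :: nat
  define c where "c k = (2::real) ^ k / (2 * d)" for k :: nat
  have E[measurable]: "E k \<in> sets M" for k unfolding E_def by measurable
  have c: "0 \<le> c k" for k unfolding c_def using d by simp
  have "a / 2 \<le> c k * prob (E k)" for k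
  proof -
    have "a * (d / 2 ^ k) \<le> prob (E k)"
      unfolding E_def using d by (intro small_ball) (auto simp: field_simps)
    from mult_left_mono[OF this c] show ?thesis using d by (simp add: c_def field_simps)
  qed
  then have "real K * (a / 2) \<le> (\<Sum>k<K. c k * prob (E k))"
    using sum_mono[of "{..<K}" "\<lambda>_. a / 2"] by simp
  then have "ennreal (real K * (a / 2)) \<le> ennreal (\<Sum>k<K. c k * prob (E k))"
    by (rule ennreal_leI)
  also have "\<dots> = (\<Sum>k<K. ennreal (c k) * emeasure M (E k))"
    using c by (simp add: sum_ennreal[symmetric] ennreal_mult emeasure_eq_measure)
  also have "\<dots> = (\<integral>\<^sup>+ \<omega>. (\<Sum>k<K. ennreal (c k) * indicator (E k) \<omega>) \<partial>M)"
    by (subst nn_integral_sum) (auto simp: nn_integral_cmult_indicator)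
  also have "\<dots> \<le> ?I"
  proof (intro nn_integral_mono)
    fix \<omega> assume "\<omega> \<in> space M"
    then have "(\<Sum>k<K. ennreal (c k) * indicator (E k) \<omega>)
        = (\<Sum>k<K. ennreal (if \<bar>Z \<omega>\<bar> < d / 2 ^ k then 2 ^ k / (2 * d) else 0))"
      by (intro sum.cong) (auto simp: E_def c_def indicator_def)
    also have "\<dots> = ennreal (\<Sum>k<K. if \<bar>Z \<omega>\<bar> < d / 2 ^ k then 2 ^ k / (2 * d) else 0)"
      using d by (intro sum_ennreal) auto
    also have "\<dots> \<le> (if Z \<omega> = 0 then \<infinity> else ennreal (1 / \<bar>Z \<omega>\<bar>))"
      using sum_dyadic_indicators_le[OF _ d] by (auto intro: ennreal_leI)
    finally show "(\<Sum>k<K. ennreal (c k) * indicator (E k) \<omega>)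
        \<le> (if Z \<omega> = 0 then \<infinity> else ennreal (1 / \<bar>Z \<omega>\<bar>))" .
  qed
  finally show ?thesis .
qed

lemma (in prob_space) nn_integral_inverse_abs_eq_infinity:
  fixes Z :: "'a \<Rightarrow> real"
  assumes "Z \<in> borel_measurable M" and a: "0 < a" and "0 < d"
    and "\<And>\<delta>. 0 < \<delta> \<Longrightarrow> \<delta> \<le> d \<Longrightarrow> a * \<delta> \<le> prob {\<omega> \<in> space M. \<bar>Z \<omega>\<bar> < \<delta>}"
  shows "(\<integral>\<^sup>+ \<omega>. (if Z \<omega> = 0 then \<infinity> else ennreal (1 / \<bar>Z \<omega>\<bar>)) \<partial>M) = \<infinity>"
    (is "?I = \<infinity>")
proof (rule ccontr)
  assume "?I \<noteq> \<infinity>"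
  then obtain t where t: "?I = ennreal t" "0 \<le> t" by (cases ?I) auto
  obtain K :: nat where "t < real K * (a / 2)" using ex_less_of_nat_mult[of "a / 2" t] a by auto
  then show False using nn_integral_inverse_abs_ge[OF assms(1,3,4), of K] t by simp
qed

text \<open>The \<open>v\<close> with \<open>\<mu> v \<ge> 1 / (2 * card S)\<close> carry at least half of the total mass,
  and \<open>t \<le> p v\<close> for each of them.\<close>

lemma sum_mult_ge_of_le_power:
  fixes \<mu> p :: "'v \<Rightarrow> real"
  assumes S: "finite S" and total: "1 \<le> (\<Sum>v\<in>S. \<mu> v)"
    and \<mu>: "\<And>v. v \<in> S \<Longrightarrow> 0 \<le> \<mu> v" and p: "\<And>v. v \<in> S \<Longrightarrow> 0 \<le> p v"
    and \<mu>_le: "\<And>v. v \<in> S \<Longrightarrow> \<mu> v \<le> p v ^ m" and m: "m \<noteq> 0"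
    and t: "0 \<le> t" "2 * real (card S) * t ^ m \<le> 1"
  shows "t / 2 \<le> (\<Sum>v\<in>S. \<mu> v * p v)"
proof -
  define H where "H = {v \<in> S. 1 / (2 * card S) \<le> \<mu> v}"
  have "S \<noteq> {}" using total by auto
  then have card_pos: "0 < real (card S)" using S by auto
  have "(\<Sum>v\<in>S - H. \<mu> v) \<le> (\<Sum>v\<in>S - H. 1 / (2 * card S))"
    by (intro sum_mono) (auto simp: H_def)
  also have "\<dots> = real (card (S - H)) / (2 * card S)" by simp
  also have "\<dots> \<le> real (card S) / (2 * card S)"
    using S by (intro divide_right_mono) (auto intro: card_mono)
  also have "\<dots> = 1 / 2" using card_pos by simp
  finally have heavy: "1 / 2 \<le> (\<Sum>v\<in>H. \<mu> v)"
    using total sum.subset_diff[of H S \<mu>] S by (simp add: H_def)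
  have p_ge: "t \<le> p v" if "v \<in> H" for v
  proof -
    have "t ^ m \<le> 1 / (2 * card S)" using t card_pos by (simp add: field_simps)
    also have "\<dots> \<le> p v ^ m" using that \<mu>_le by (force simp: H_def)
    finally show ?thesis
      using m p that power_le_imp_le_base[of t "m - 1" "p v"] by (simp add: H_def)
  qed
  have "t / 2 \<le> t * (\<Sum>v\<in>H. \<mu> v)"
    using mult_left_mono[OF heavy t(1)] by simp
  also have "\<dots> = (\<Sum>v\<in>H. \<mu> v * t)"
    by (simp add: sum_distrib_left mult.commute)
  also have "\<dots> \<le> (\<Sum>v\<in>H. \<mu> v * p v)"
    using p_ge \<mu> by (intro sum_mono mult_left_mono) (auto simp: H_def)
  also have "\<dots> \<le> (\<Sum>v\<in>S. \<mu> v * p v)"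
    using S \<mu> p by (intro sum_mono2) (auto simp: H_def)
  finally show ?thesis .
qed

section \<open>The normalized cross product of the sample\<close>

locale cross_setting = prob_space M for M :: "'a measure" +
  fixes X :: "nat \<Rightarrow> 'a \<Rightarrow> real^('n::{finite,linorder})" and r :: real
  assumes two_le_card: "2 \<le> CARD('n)"
    and X_measurable: "\<And>j. j \<in> {1..CARD('n)} \<Longrightarrow> X j \<in> borel_measurable M"
    and X_indep: "indep_vars (\<lambda>_. borel) X {1..CARD('n)}"
    and X_distr: "\<And>j. j \<in> {1..CARD('n)} \<Longrightarrow> distr M borel (X j) = distr M borel (X 1)"
    and r_pos: "0 < r"
    and X_bounded: "\<And>j. j \<in> {1..CARD('n)} \<Longrightarrow> AE \<omega> in M. norm (X j \<omega>) < r"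
begin

definition unit_normal :: "'a \<Rightarrow> real^('n::{finite,linorder})" where
  "unit_normal \<omega> = (1 / infnorm (gen_cross (\<lambda>j. X j \<omega>))) *\<^sub>R gen_cross (\<lambda>j. X j \<omega>)"

lemma X_last_measurable[measurable]: "X (CARD('n)) \<in> borel_measurable M"
  using X_measurable two_le_card by auto

lemma unit_normal_measurable[measurable]: "unit_normal \<in> borel_measurable M"
proof -
  have "(\<lambda>\<omega>. gen_cross (\<lambda>j. X j \<omega>)) \<in> borel_measurable M"
    by (rule gen_cross_measurable) (use X_measurable in auto)
  from measurable_compose[OF this borel_measurable_infnorm_normalize]
  show ?thesis unfolding unit_normal_def[abs_def] .
qed

lemma inner_unit_normal_eq_0: "1 \<le> j \<Longrightarrow> j < CARD('n) \<Longrightarrow> X j \<omega> \<bullet> unit_normal \<omega> = 0"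
  using gen_cross_orthogonal[of j "\<lambda>j. X j \<omega>"] by (simp add: unit_normal_def inner_commute)

lemma AE_infnorm_unit_normal:
  assumes "AE \<omega> in M. gen_cross (\<lambda>j. X j \<omega>) \<noteq> 0"
  shows "AE \<omega> in M. infnorm (unit_normal \<omega>) = 1"
  using assms by eventually_elim (simp add: unit_normal_def infnorm_mul infnorm_eq_0 infnorm_pos_le)

lemma prob_X_vimage_eq_last:
  assumes "j \<in> {1..CARD('n)}" "H \<in> sets borel"
  shows "prob (X j -` H \<inter> space M) = prob (X (CARD('n)) -` H \<inter> space M)"
proof -
  have "prob (X k -` H \<inter> space M) = measure (distr M borel (X 1)) H" if "k \<in> {1..CARD('n)}" for k
    using that assms X_measurable X_distr[OF that, symmetric] by (simp add: measure_distr)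
  from this[OF assms(1)] this[of "CARD('n)"] show ?thesis using two_le_card by simp
qed

lemma AE_abs_inner_X_less_of_near:
  "AE \<omega> in M. norm (unit_normal \<omega> - y) < \<epsilon> \<longrightarrow> (\<forall>j\<in>{1..CARD('n) - 1}. \<bar>X j \<omega> \<bullet> y\<bar> < r * \<epsilon>)"
proof -
  have "AE \<omega> in M. \<forall>j\<in>{1..CARD('n) - 1}. norm (X j \<omega>) < r"
    using X_bounded by (intro AE_finite_allI) auto
  then show ?thesis
  proof eventually_elim
    case (elim \<omega>)
    have "\<bar>X j \<omega> \<bullet> y\<bar> < r * \<epsilon>" if "j \<in> {1..CARD('n) - 1}" "norm (unit_normal \<omega> - y) < \<epsilon>" for j
    proof -
      have "\<bar>X j \<omega> \<bullet> y\<bar> \<le> norm (X j \<omega>) * norm (y - unit_normal \<omega>)"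
        using that inner_unit_normal_eq_0 by (intro abs_inner_le_of_inner_eq_0) auto
      also have "\<dots> < r * \<epsilon>"
        using elim that by (intro mult_strict_mono') (auto simp: norm_minus_commute)
      finally show ?thesis .
    qed
    then show ?case by blast
  qed
qed

lemma prob_unit_normal_near_le:
  "prob {\<omega> \<in> space M. norm (unit_normal \<omega> - y) < \<epsilon>}
    \<le> prob {\<omega> \<in> space M. \<bar>X (CARD('n)) \<omega> \<bullet> y\<bar> < r * \<epsilon>} ^ (CARD('n) - 1)"
proof -
  define H where "H = {v::real^('n::{finite,linorder}). \<bar>v \<bullet> y\<bar> < r * \<epsilon>}"
  define J where "J = {1..CARD('n) - 1}"
  have H: "H \<in> sets borel" unfolding H_def by measurable
  have J: "J \<noteq> {}" "finite J" "J \<subseteq> {1..CARD('n)}" using two_le_card by (auto simp: J_def)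
  have "(\<Inter>j\<in>J. X j -` H \<inter> space M) \<in> events"
    using J H X_measurable by (intro sets.finite_INT) (auto intro: measurable_sets)
  moreover have "AE \<omega> in M. \<omega> \<in> {\<omega> \<in> space M. norm (unit_normal \<omega> - y) < \<epsilon>}
      \<longrightarrow> \<omega> \<in> (\<Inter>j\<in>J. X j -` H \<inter> space M)"
    using AE_abs_inner_X_less_of_near[of y \<epsilon>] by eventually_elim (auto simp: H_def J_def)
  ultimately have "prob {\<omega> \<in> space M. norm (unit_normal \<omega> - y) < \<epsilon>}
      \<le> prob (\<Inter>j\<in>J. X j -` H \<inter> space M)"
    by (intro finite_measure_mono_AE) auto
  also have "\<dots> = (\<Prod>j\<in>J. prob (X j -` H \<inter> space M))"
    using J H by (intro indep_varsD[OF X_indep]) auto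
  also have "\<dots> = (\<Prod>j\<in>J. prob (X (CARD('n)) -` H \<inter> space M))"
    using J H by (intro prod.cong refl prob_X_vimage_eq_last) auto
  also have "\<dots> = prob (X (CARD('n)) -` H \<inter> space M) ^ (CARD('n) - 1)"
    by (simp add: J_def)
  also have "X (CARD('n)) -` H \<inter> space M = {\<omega> \<in> space M. \<bar>X (CARD('n)) \<omega> \<bullet> y\<bar> < r * \<epsilon>}"
    by (auto simp: H_def)
  finally show ?thesis .
qed

lemma indep_unit_normal_X_last: "indep_var borel unit_normal borel (X (CARD('n)))"
proof -
  define A where "A = {1..CARD('n) - 1}"
  have "A \<inter> {CARD('n)} = {}" "A \<subseteq> {1..CARD('n)}" "{CARD('n)} \<subseteq> {1..CARD('n)}"
    using two_le_card by (auto simp: A_def)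
  note indep = indep_var_restrict[OF X_indep this]
  define normal where "normal f = (1 / infnorm (gen_cross f)) *\<^sub>R gen_cross f"
    for f :: "nat \<Rightarrow> real^('n::{finite,linorder})"
  have "(\<lambda>f. gen_cross (\<lambda>k. f k))
      \<in> borel_measurable (PiM A (\<lambda>_. borel :: (real^('n::{finite,linorder})) measure))"
    by (rule gen_cross_measurable) (auto simp: A_def)
  from measurable_compose[OF this borel_measurable_infnorm_normalize]
  have "normal \<in> borel_measurable (PiM A (\<lambda>_. borel))" by (simp add: normal_def[abs_def])
  moreover have "(\<lambda>f. f (CARD('n)))
      \<in> borel_measurable (PiM {CARD('n)} (\<lambda>_. borel :: (real^('n::{finite,linorder})) measure))"
    by (rule measurable_component_singleton) simp
  ultimately have "indep_var borel (normal \<circ> (\<lambda>\<omega>. restrict (\<lambda>i. X i \<omega>) A))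
      borel ((\<lambda>f. f (CARD('n))) \<circ> (\<lambda>\<omega>. restrict (\<lambda>i. X i \<omega>) {CARD('n)}))"
    by (rule indep_var_compose[OF indep])
  moreover have "gen_cross (restrict (\<lambda>i. X i \<omega>) A) = gen_cross (\<lambda>j. X j \<omega>)" for \<omega>
    by (rule gen_cross_cong) (auto simp: A_def)
  then have "normal \<circ> (\<lambda>\<omega>. restrict (\<lambda>i. X i \<omega>) A) = unit_normal"
    by (simp add: fun_eq_iff normal_def unit_normal_def)
  ultimately show ?thesis by (simp add: comp_def)
qed

lemma zero_mem_mould_inner_X_last:
  assumes "y \<in> mould M (CARD('n) - 1) unit_normal"
  shows "0 \<in> mould M 1 (\<lambda>\<omega>. X (CARD('n)) \<omega> \<bullet> y)"
proof -
  define m where "m = CARD('n) - 1"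
  define p where "p \<delta> = prob {\<omega> \<in> space M. \<bar>X (CARD('n)) \<omega> \<bullet> y\<bar> < \<delta>}" for \<delta>
  have m: "m \<noteq> 0" using two_le_card by (simp add: m_def)
  obtain c b where c: "0 < c" "0 < b" and near: "\<And>\<epsilon>. 0 < \<epsilon> \<Longrightarrow> \<epsilon> < b \<Longrightarrow>
      c \<le> prob {\<omega> \<in> space M. norm (unit_normal \<omega> - y) < \<epsilon>} / \<epsilon> ^ m"
    using assms unfolding mem_mould_iff eventually_at_right_field m_def by auto
  define c' where "c' = min 1 c"
  have c': "0 < c'" "c' ^ m \<le> c"
    using c power_decreasing[of 1 m c'] m by (auto simp: c'_def min_le_iff_disj)
  have linear: "c' * \<epsilon> \<le> p (r * \<epsilon>)" if \<epsilon>: "0 < \<epsilon>" "\<epsilon> < b" for \<epsilon>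
  proof -
    have "(c' * \<epsilon>) ^ m \<le> c * \<epsilon> ^ m"
      using c' \<epsilon> by (simp add: power_mult_distrib mult_right_mono)
    also have "\<dots> \<le> prob {\<omega> \<in> space M. norm (unit_normal \<omega> - y) < \<epsilon>}"
      using near[OF \<epsilon>] \<epsilon> by (simp add: field_simps)
    also have "\<dots> \<le> p (r * \<epsilon>) ^ m"
      unfolding p_def m_def by (rule prob_unit_normal_near_le)
    finally show ?thesis
      using m power_le_imp_le_base[of "c' * \<epsilon>" "m - 1" "p (r * \<epsilon>)"] by (simp add: p_def)
  qed
  have "c' / r \<le> p \<delta> / \<delta>" if "0 < \<delta>" "\<delta> < r * b" for \<delta>
    using linear[of "\<delta> / r"] that r_pos by (simp add: field_simps)
  then show ?thesis
    using c' c r_pos unfolding mem_mould_iff eventually_at_right_field p_def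
    by (intro exI[of _ "c' / r"] conjI exI[of _ "r * b"]) auto
qed

lemma cube_event_in_events: "{\<omega> \<in> space M. cube_index h (unit_normal \<omega>) = v} \<in> events"
  using measurable_sets[OF unit_normal_measurable vimage_cube_index_sets] by (simp add: vimage_def Int_def conj_commute)

lemma prob_cube_le:
  assumes "0 < \<epsilon>"
  defines "h \<equiv> \<epsilon> / CARD('n)"
  shows "prob {\<omega> \<in> space M. cube_index h (unit_normal \<omega>) = v}
    \<le> prob {\<omega> \<in> space M. \<bar>X (CARD('n)) \<omega> \<bullet> cube_center h v\<bar> < r * \<epsilon>} ^ (CARD('n) - 1)"
proof -
  have "prob {\<omega> \<in> space M. cube_index h (unit_normal \<omega>) = v}
      \<le> prob {\<omega> \<in> space M. norm (unit_normal \<omega> - cube_center h v) < \<epsilon>}"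
    using norm_minus_cube_center_less[OF assms(1)]
    by (intro finite_measure_mono) (auto simp: h_def)
  also have "\<dots> \<le> prob {\<omega> \<in> space M. \<bar>X (CARD('n)) \<omega> \<bullet> cube_center h v\<bar> < r * \<epsilon>} ^ (CARD('n) - 1)"
    by (rule prob_unit_normal_near_le)
  finally show ?thesis .
qed

lemma sum_prob_cube_ge_1:
  assumes "AE \<omega> in M. gen_cross (\<lambda>j. X j \<omega>) \<noteq> 0" and h: "0 < h" "h \<le> 1"
  shows "1 \<le> (\<Sum>v \<in> cube_index h ` {y. infnorm y = 1}. prob {\<omega> \<in> space M. cube_index h (unit_normal \<omega>) = v})"
proof -
  let ?S = "cube_index h ` {y::real^('n::{finite,linorder}). infnorm y = 1}"
  have "AE \<omega> in M. \<omega> \<in> space M \<longrightarrow> \<omega> \<in> (\<Union>v\<in>?S. {\<omega> \<in> space M. cube_index h (unit_normal \<omega>) = v})"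
    using AE_infnorm_unit_normal[OF assms(1)] by eventually_elim auto
  moreover have "(\<Union>v\<in>?S. {\<omega> \<in> space M. cube_index h (unit_normal \<omega>) = v}) \<in> events"
    using card_cube_index_sphere_le(1)[OF h] cube_event_in_events by (intro sets.finite_UN) auto
  ultimately have "prob (space M) \<le> prob (\<Union>v\<in>?S. {\<omega> \<in> space M. cube_index h (unit_normal \<omega>) = v})"
    by (intro finite_measure_mono_AE) auto
  also have "\<dots> = (\<Sum>v\<in>?S. prob {\<omega> \<in> space M. cube_index h (unit_normal \<omega>) = v})"
    using card_cube_index_sphere_le(1)[OF h] cube_event_in_events
    by (intro finite_measure_finite_Union) (auto simp: disjoint_family_on_def)
  finally show ?thesis by (simp add: prob_space)
qed

lemma AE_abs_inner_unit_normal_less: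
  assumes "0 < \<epsilon>"
  defines "h \<equiv> \<epsilon> / CARD('n)"
  shows "AE \<omega> in M. \<bar>X (CARD('n)) \<omega> \<bullet> cube_center h (cube_index h (unit_normal \<omega>))\<bar> < r * \<epsilon>
    \<longrightarrow> \<bar>X (CARD('n)) \<omega> \<bullet> unit_normal \<omega>\<bar> < 2 * r * \<epsilon>"
proof -
  have "AE \<omega> in M. norm (X (CARD('n)) \<omega>) < r" using X_bounded two_le_card by auto
  then show ?thesis
  proof eventually_elim
    case (elim \<omega>)
    let ?x = "X (CARD('n)) \<omega>" and ?c = "cube_center h (cube_index h (unit_normal \<omega>))"
    have "\<bar>?x \<bullet> unit_normal \<omega>\<bar> \<le> \<bar>?x \<bullet> ?c\<bar> + \<bar>?x \<bullet> (unit_normal \<omega> - ?c)\<bar>"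
      by (simp add: inner_diff_right)
    also have "\<bar>?x \<bullet> (unit_normal \<omega> - ?c)\<bar> \<le> norm ?x * norm (unit_normal \<omega> - ?c)"
      by (rule Cauchy_Schwarz_ineq2)
    also have "\<dots> < r * \<epsilon>"
      using elim norm_minus_cube_center_less[OF assms(1)] by (intro mult_strict_mono') (auto simp: h_def)
    finally show ?case by auto
  qed
qed

lemma sum_prob_cube_mult_le:
  assumes "0 < \<epsilon>" "finite S"
  defines "h \<equiv> \<epsilon> / CARD('n)"
  shows "(\<Sum>v\<in>S. prob {\<omega> \<in> space M. cube_index h (unit_normal \<omega>) = v}
      * prob {\<omega> \<in> space M. \<bar>X (CARD('n)) \<omega> \<bullet> cube_center h v\<bar> < r * \<epsilon>})
    \<le> prob {\<omega> \<in> space M. \<bar>X (CARD('n)) \<omega> \<bullet> unit_normal \<omega>\<bar> < 2 * r * \<epsilon>}"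
proof -
  define A where "A v = {\<omega> \<in> space M. cube_index h (unit_normal \<omega>) = v}" for v
  define B where "B v = {\<omega> \<in> space M. \<bar>X (CARD('n)) \<omega> \<bullet> cube_center h v\<bar> < r * \<epsilon>}" for v
  have AB: "A v \<in> events" "B v \<in> events" for v
    unfolding A_def B_def using cube_event_in_events by auto
  have indep: "prob (A v \<inter> B v) = prob (A v) * prob (B v)" for v
  proof -
    have "{w::real^('n::{finite,linorder}). \<bar>w \<bullet> cube_center h v\<bar> < r * \<epsilon>} \<in> sets borel" by measurable
    from indep_varD[OF indep_unit_normal_X_last vimage_cube_index_sets this]
    show ?thesis by (simp add: A_def B_def vimage_def Int_def conj_commute conj_left_commute)
  qed
  have "(\<Sum>v\<in>S. prob (A v) * prob (B v)) = (\<Sum>v\<in>S. prob (A v \<inter> B v))"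
    by (simp only: indep)
  also have "\<dots> = prob (\<Union>v\<in>S. A v \<inter> B v)"
    using assms(2) AB by (intro finite_measure_finite_Union[symmetric]) (auto simp: disjoint_family_on_def A_def)
  also have "\<dots> \<le> prob {\<omega> \<in> space M. \<bar>X (CARD('n)) \<omega> \<bullet> unit_normal \<omega>\<bar> < 2 * r * \<epsilon>}"
    using AE_abs_inner_unit_normal_less[OF assms(1)]
    by (intro finite_measure_mono_AE) (auto simp: A_def B_def h_def elim: eventually_mono)
  finally show ?thesis by (simp add: A_def B_def)
qed

lemma prob_abs_inner_unit_normal_less_ge:
  assumes nonzero: "AE \<omega> in M. gen_cross (\<lambda>j. X j \<omega>) \<noteq> 0" and d: "0 < d" "d \<le> 2 * r"
  shows "d / (64 * r * real CARD('n) ^ 2) \<le> prob {\<omega> \<in> space M. \<bar>X (CARD('n)) \<omega> \<bullet> unit_normal \<omega>\<bar> < d}"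
proof -
  define \<epsilon> where "\<epsilon> = d / (2 * r)"
  define h where "h = \<epsilon> / CARD('n)"
  define m where "m = CARD('n) - 1"
  define t where "t = \<epsilon> / (16 * real CARD('n) ^ 2)"
  define S where "S = cube_index h ` {y::real^('n::{finite,linorder}). infnorm y = 1}"
  define \<mu> where "\<mu> v = prob {\<omega> \<in> space M. cube_index h (unit_normal \<omega>) = v}" for v
  define p where "p v = prob {\<omega> \<in> space M. \<bar>X (CARD('n)) \<omega> \<bullet> cube_center h v\<bar> < r * \<epsilon>}" for v
  have \<epsilon>: "0 < \<epsilon>" "\<epsilon> \<le> 1" using d r_pos by (auto simp: \<epsilon>_def field_simps)
  have n: "1 \<le> 4 * real CARD('n)" using two_le_card by simp
  have h: "0 < h" "h \<le> 1"
    using \<epsilon> n by (auto simp: h_def field_simps intro: order_trans[OF \<epsilon>(2)])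
  have m: "m \<noteq> 0" using two_le_card by (simp add: m_def)
  note S = card_cube_index_sphere_le[where 'n='n, OF h, folded S_def m_def]
  have "2 * real (card S) * t ^ m \<le> 2 * (2 * real CARD('n) * (4 / h) ^ m) * t ^ m"
    using S(2) \<epsilon> by (simp add: t_def)
  also have "\<dots> = 4 * real CARD('n) * (1 / (4 * real CARD('n))) ^ m"
    using \<epsilon> n by (simp add: h_def t_def power_mult_distrib[symmetric] power2_eq_square)
  also have "\<dots> \<le> 4 * real CARD('n) * (1 / (4 * real CARD('n)))"
    using n m power_decreasing[of 1 m "1 / (4 * real CARD('n))"] by (intro mult_left_mono) auto
  also have "\<dots> = 1" using n by simp
  finally have "t / 2 \<le> (\<Sum>v\<in>S. \<mu> v * p v)"
    using S(1) sum_prob_cube_ge_1[OF nonzero h] prob_cube_le[OF \<epsilon>(1)] m \<epsilon>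
    by (intro sum_mult_ge_of_le_power) (auto simp: S_def \<mu>_def p_def m_def h_def t_def)
  also have "\<dots> \<le> prob {\<omega> \<in> space M. \<bar>X (CARD('n)) \<omega> \<bullet> unit_normal \<omega>\<bar> < 2 * r * \<epsilon>}"
    using sum_prob_cube_mult_le[OF \<epsilon>(1) S(1)]
    by (simp add: S_def \<mu>_def p_def h_def)
  finally show ?thesis using r_pos by (simp add: t_def \<epsilon>_def)
qed

lemma zero_mem_mould_inner_unit_normal:
  assumes "AE \<omega> in M. gen_cross (\<lambda>j. X j \<omega>) \<noteq> 0"
  shows "0 \<in> mould M 1 (\<lambda>\<omega>. X (CARD('n)) \<omega> \<bullet> unit_normal \<omega>)"
proof -
  have "1 / (64 * r * real CARD('n) ^ 2)
      \<le> prob {\<omega> \<in> space M. \<bar>X (CARD('n)) \<omega> \<bullet> unit_normal \<omega>\<bar> < \<delta>} / \<delta>" if "0 < \<delta>" "\<delta> < 2 * r" for \<delta>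
    using prob_abs_inner_unit_normal_less_ge[OF assms that(1)] that by (simp add: field_simps)
  then show ?thesis
    using r_pos unfolding mem_mould_iff eventually_at_right_field
    by (intro exI[of _ "1 / (64 * r * real CARD('n) ^ 2)"] conjI exI[of _ "2 * r"]) auto
qed

end

theorem mainTheorem9:
  fixes M :: "'a measure" and X :: "nat \<Rightarrow> 'a \<Rightarrow> real^('n::{finite,linorder})"
    and r :: real
  defines "n \<equiv> CARD('n)"
  defines "Y \<equiv> (\<lambda>\<omega>. (1 / infnorm (gen_cross (\<lambda>j. X j \<omega>))) *\<^sub>R gen_cross (\<lambda>j. X j \<omega>))"
  assumes "prob_space M"
    and "n \<ge> 2"
    and "\<forall>j\<in>{1..n}. X j \<in> borel_measurable M"
    and "prob_space.indep_vars M (\<lambda>_. borel) X {1..n}"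
    and "\<forall>j\<in>{1..n}. distr M borel (X j) = distr M borel (X 1)"
    and "AE \<omega> in M. inj_on (\<lambda>j. X j \<omega>) {1..n-1} \<and>
                    independent ((\<lambda>j. X j \<omega>) ` {1..n-1})"
    and "r > 0"
    and "\<forall>j\<in>{1..n}. AE \<omega> in M. norm (X j \<omega>) < r"
  shows "(\<forall>y \<in> mould M (n - 1) Y. (0::real) \<in> mould M 1 (\<lambda>\<omega>. X n \<omega> \<bullet> y))
       \<and> (0::real) \<in> mould M 1 (\<lambda>\<omega>. X n \<omega> \<bullet> Y \<omega>)
       \<and> (\<integral>\<^sup>+ \<omega>. (if X n \<omega> \<bullet> Y \<omega> = 0 then \<infinity> else ennreal (1 / \<bar>X n \<omega> \<bullet> Y \<omega>\<bar>)) \<partial>M) = \<infinity>"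
proof -
  interpret cross_setting M X r
    using assms(3-10) unfolding cross_setting_def cross_setting_axioms_def n_def by blast
  have Y: "Y = unit_normal" by (simp add: Y_def fun_eq_iff unit_normal_def)
  have nonzero: "AE \<omega> in M. gen_cross (\<lambda>j. X j \<omega>) \<noteq> 0"
    using assms(8) unfolding n_def by eventually_elim (simp add: gen_cross_nonzero)
  show ?thesis
    unfolding Y n_def
  proof (intro conjI ballI)
    show "0 \<in> mould M 1 (\<lambda>\<omega>. X (CARD('n)) \<omega> \<bullet> y)" if "y \<in> mould M (CARD('n) - 1) unit_normal" for y
      using zero_mem_mould_inner_X_last[OF that] .
    show "0 \<in> mould M 1 (\<lambda>\<omega>. X (CARD('n)) \<omega> \<bullet> unit_normal \<omega>)"
      using zero_mem_mould_inner_unit_normal[OF nonzero] .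
    show "(\<integral>\<^sup>+ \<omega>. (if X (CARD('n)) \<omega> \<bullet> unit_normal \<omega> = 0 then \<infinity>
        else ennreal (1 / \<bar>X (CARD('n)) \<omega> \<bullet> unit_normal \<omega>\<bar>)) \<partial>M) = \<infinity>"
      using prob_abs_inner_unit_normal_less_ge[OF nonzero] r_pos
      by (intro nn_integral_inverse_abs_eq_infinity[where a="1 / (64 * r * real CARD('n) ^ 2)" and d="2 * r"])
        (auto simp: field_simps)
  qed
qed

end
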